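(* Let $G$ be a (finite, simple) graph with at least one edge. Then $\mathrm{tw}(G) \le \mathrm{cocirc}(G)$, i.e. the treewidth of $G$ is at most its cocircumference.
   Context: A bond of a graph $G$ is an inclusion-wise minimal set of edges $F$ such that $G-F$ has more connected components than $G$. The cocircumference $\mathrm{cocirc}(G)$ of a graph with at least one edge is the maximum size of a bond of $G$. A tree-decomposition of $G$ is a family $\{X_u : u\in V(T)\}$ of subsets of $V(G)$ indexed by the nodes of a tree $T$ such that for every $x\in V(G)$ the nodes $u$ with $x\in X_u$ induce a non-empty subtree of $T$, and every edge $xy$ of $G$ satisfies $\{x,y\}\subseteq X_u$ for some $u$; its width is $\max_u |X_u|-1$, and the treewidth $\mathrm{tw}(G)$ is the minimum width of a tree-decomposition of $G$. *)

theory Defs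
  imports Main
begin

definition simple_graph :: "'a set \<Rightarrow> 'a set set \<Rightarrow> bool" where
  "simple_graph V E \<longleftrightarrow> finite V \<and>
     (\<forall>e\<in>E. \<exists>x y. x \<noteq> y \<and> x \<in> V \<and> y \<in> V \<and> e = {x, y})"

definition adj :: "'a set set \<Rightarrow> 'a \<Rightarrow> 'a \<Rightarrow> bool" where
  "adj E x y \<longleftrightarrow> x \<noteq> y \<and> {x, y} \<in> E"

definition conn_rel :: "'a set \<Rightarrow> 'a set set \<Rightarrow> ('a \<times> 'a) set" where
  "conn_rel V E = {(x, y). x \<in> V \<and> y \<in> V \<and> (adj E)\<^sup>*\<^sup>* x y}"

definition num_components :: "'a set \<Rightarrow> 'a set set \<Rightarrow> nat" where
  "num_components V E = card (V // conn_rel V E)"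

definition connected_graph :: "'a set \<Rightarrow> 'a set set \<Rightarrow> bool" where
  "connected_graph V E \<longleftrightarrow> V \<noteq> {} \<and> (\<forall>x\<in>V. \<forall>y\<in>V. (adj E)\<^sup>*\<^sup>* x y)"

definition is_bond :: "'a set \<Rightarrow> 'a set set \<Rightarrow> 'a set set \<Rightarrow> bool" where
  "is_bond V E F \<longleftrightarrow> F \<subseteq> E \<and> num_components V (E - F) > num_components V E \<and>
     (\<forall>F'. F' \<subset> F \<longrightarrow> \<not> (num_components V (E - F') > num_components V E))"

definition cocirc :: "'a set \<Rightarrow> 'a set set \<Rightarrow> nat" where
  "cocirc V E = Max (card ` {F. is_bond V E F})"

definition is_tree :: "nat set \<Rightarrow> nat set set \<Rightarrow> bool" where
  "is_tree N TE \<longleftrightarrow> simple_graph N TE \<and> connected_graph N TE \<and>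
     (\<forall>e\<in>TE. \<not> connected_graph N (TE - {e}))"

definition tree_decomposition ::
  "'a set \<Rightarrow> 'a set set \<Rightarrow> nat set \<Rightarrow> nat set set \<Rightarrow> (nat \<Rightarrow> 'a set) \<Rightarrow> bool" where
  "tree_decomposition V E N TE X \<longleftrightarrow>
     is_tree N TE \<and>
     (\<forall>u\<in>N. X u \<subseteq> V) \<and>
     (\<forall>x\<in>V. connected_graph {u\<in>N. x \<in> X u} {e\<in>TE. e \<subseteq> {u\<in>N. x \<in> X u}}) \<and>
     (\<forall>e\<in>E. \<exists>u\<in>N. e \<subseteq> X u)"

definition td_width :: "nat set \<Rightarrow> (nat \<Rightarrow> 'a set) \<Rightarrow> nat" where
  "td_width N X = Max ((\<lambda>u. card (X u)) ` N) - 1"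

definition treewidth :: "'a set \<Rightarrow> 'a set set \<Rightarrow> nat" where
  "treewidth V E = Min {td_width N X | N TE X. tree_decomposition V E N TE X}"

end

theory Submission
  imports Defs
begin

text \<open>Call a connected vertex set S good if the rest of its component, reached from S
  outside S, is connected or empty. Then the edges leaving S form a bond, so S has at most
  cocirc(G) neighbours. By induction on |S|, a good S has a tree decomposition of the edges
  meeting S, with bags inside S and its neighbourhood, of size at most cocirc(G) + 1, and
  with the neighbourhood in the root bag: take as root bag a vertex v of S adjacent to the
  outer part together with the neighbourhood of S, and hang below it the decompositions of
  the components of S - v, which are good again. The components of G are good, and gluing
  their decompositions gives treewidth at most cocirc(G).\<close>

section \<open>Walks and connectivity in simple graphs\<close>

lemma adj_commute: "adj E x y \<longleftrightarrow> adj E y x"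
  by (auto simp: adj_def insert_commute)

lemma walk_sym: "(adj E)\<^sup>*\<^sup>* x y \<Longrightarrow> (adj E)\<^sup>*\<^sup>* y x"
proof -
  have "symp (adj E)" by (rule sympI) (simp add: adj_commute)
  then show "(adj E)\<^sup>*\<^sup>* x y \<Longrightarrow> (adj E)\<^sup>*\<^sup>* y x" by (rule sympD[OF symp_rtranclp])
qed

lemma rtranclp_map:
  assumes "\<And>x y. R x y \<Longrightarrow> S\<^sup>*\<^sup>* (f x) (f y)" and "R\<^sup>*\<^sup>* x y"
  shows "S\<^sup>*\<^sup>* (f x) (f y)"
  using assms(2)
proof induction
  case (step y z)
  then show ?case using assms(1) rtranclp_trans by metis
qed simp

lemma walk_mono: "E \<subseteq> E' \<Longrightarrow> (adj E)\<^sup>*\<^sup>* x y \<Longrightarrow> (adj E')\<^sup>*\<^sup>* x y"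
  by (rule rtranclp_mono[THEN predicate2D, rotated]) (auto simp: adj_def)

lemma walk_closed:
  assumes "(adj E)\<^sup>*\<^sup>* x y" "x \<in> A" "\<forall>e\<in>E. e \<inter> A \<noteq> {} \<longrightarrow> e \<subseteq> A"
  shows "y \<in> A"
  using assms(1,2)
proof induction
  case (step y z)
  then have "{y, z} \<in> E" "y \<in> A" unfolding adj_def by auto
  then have "{y, z} \<subseteq> A" using assms(3) by auto
  then show ?case by simp
qed

lemma rtranclp_exit:
  assumes "R\<^sup>*\<^sup>* x y" "x \<in> S" "y \<notin> S"
  obtains a b where "a \<in> S" "b \<notin> S" "R a b"
  using assms
proof induction
  case (step y z)
  then show ?case by (cases "y \<in> S") blast+
qed simp

lemma connected_graph_mono:
  assumes "connected_graph A E" "E \<subseteq> E'"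
  shows "connected_graph A E'"
  using assms(1) walk_mono[OF assms(2)] unfolding connected_graph_def by simp

lemma connected_graphI_hub:
  assumes "v \<in> A" "\<And>x. x \<in> A \<Longrightarrow> (adj E)\<^sup>*\<^sup>* x v"
  shows "connected_graph A E"
  unfolding connected_graph_def
proof (intro conjI ballI)
  show "A \<noteq> {}" using assms(1) by blast
  fix x y assume "x \<in> A" "y \<in> A"
  then show "(adj E)\<^sup>*\<^sup>* x y" using assms(2) walk_sym rtranclp_trans by metis
qed

lemma connected_graph_Un_edge:
  assumes "connected_graph A1 E1" "connected_graph A2 E2" "a \<in> A1" "b \<in> A2"
    "E1 \<subseteq> E" "E2 \<subseteq> E" "a \<noteq> b" "{a, b} \<in> E"
  shows "connected_graph (A1 \<union> A2) E"
proof (rule connected_graphI_hub)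
  show "a \<in> A1 \<union> A2" using assms(3) by simp
  have ba: "(adj E)\<^sup>*\<^sup>* b a" using assms(7,8) by (auto simp: adj_def insert_commute)
  fix x assume "x \<in> A1 \<union> A2"
  then show "(adj E)\<^sup>*\<^sup>* x a"
  proof
    assume "x \<in> A1"
    then show ?thesis
      using connected_graph_mono[OF assms(1,5)] assms(3) unfolding connected_graph_def by blast
  next
    assume "x \<in> A2"
    then have "(adj E)\<^sup>*\<^sup>* x b"
      using connected_graph_mono[OF assms(2,6)] assms(4) unfolding connected_graph_def by blast
    then show ?thesis using ba by (rule rtranclp_trans)
  qed
qed

lemma simple_graph_edgeE:
  assumes "simple_graph V E" "e \<in> E"
  obtains x y where "x \<noteq> y" "x \<in> V" "y \<in> V" "e = {x, y}"
  using assms unfolding simple_graph_def by blast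

lemma simple_graph_edge_subset: "simple_graph V E \<Longrightarrow> e \<in> E \<Longrightarrow> e \<subseteq> V"
  by (metis empty_subsetI insert_subset simple_graph_edgeE)

lemma simple_graph_finite_edges:
  assumes "simple_graph V E"
  shows "finite E"
proof -
  have "E \<subseteq> Pow V" using simple_graph_edge_subset[OF assms] by blast
  moreover have "finite V" using assms unfolding simple_graph_def by simp
  ultimately show ?thesis using finite_subset by blast
qed


section \<open>Gluing trees\<close>

lemma is_tree_singleton: "is_tree {m} {}"
  unfolding is_tree_def simple_graph_def connected_graph_def by auto

lemma is_tree_edge_subset:
  assumes "is_tree N T" "e \<in> T"
  shows "e \<subseteq> N"
  using assms(1) simple_graph_edge_subset[OF _ assms(2)] unfolding is_tree_def by simp

text \<open>Collapsing the second tree to the attachment point a maps walks of the glued tree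
  avoiding an edge of the first tree to walks of the first tree avoiding it.\<close>
lemma glued_tree_bridge:
  assumes t1: "is_tree N1 T1" and t2: "is_tree N2 T2" and d: "N1 \<inter> N2 = {}"
    and a: "a \<in> N1" and b: "b \<in> N2" and e: "e \<in> T1"
  shows "\<not> connected_graph (N1 \<union> N2) ((T1 \<union> T2 \<union> {{a, b}}) - {e})"
proof
  define T where "T = (T1 \<union> T2 \<union> {{a, b}}) - {e}"
  assume "connected_graph (N1 \<union> N2) ((T1 \<union> T2 \<union> {{a, b}}) - {e})"
  then have walk: "\<forall>p\<in>N1. \<forall>q\<in>N1. (adj T)\<^sup>*\<^sup>* p q" unfolding connected_graph_def T_def by blast
  obtain p q where pq: "p \<in> N1" "q \<in> N1" "\<not> (adj (T1 - {e}))\<^sup>*\<^sup>* p q"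
    using t1 e a unfolding is_tree_def connected_graph_def by blast
  define f where "f z = (if z \<in> N1 then z else a)" for z
  have "(adj (T1 - {e}))\<^sup>*\<^sup>* (f x) (f y)" if "adj T x y" for x y
  proof -
    from that have xy: "x \<noteq> y" "{x, y} \<in> T" unfolding adj_def by auto
    then consider "{x, y} \<in> T1 - {e}" | "{x, y} \<in> T2" | "{x, y} = {a, b}" unfolding T_def by auto
    then show ?thesis
    proof cases
      case 1
      then have "x \<in> N1" "y \<in> N1" using is_tree_edge_subset[OF t1] by auto
      then show ?thesis using 1 xy(1) unfolding f_def adj_def by auto
    next
      case 2
      then have "x \<notin> N1" "y \<notin> N1" using is_tree_edge_subset[OF t2] d by auto
      then show ?thesis unfolding f_def by simp
    next
      case 3
      then show ?thesis using a b d unfolding f_def by (auto simp: doubleton_eq_iff)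
    qed
  qed
  moreover have "(adj T)\<^sup>*\<^sup>* p q" using walk pq by blast
  ultimately have "(adj (T1 - {e}))\<^sup>*\<^sup>* (f p) (f q)" by (rule rtranclp_map)
  then show False using pq unfolding f_def by simp
qed

lemma simple_graph_Un_edge:
  assumes g1: "simple_graph N1 T1" and g2: "simple_graph N2 T2"
    and "a \<in> N1" "b \<in> N2" "a \<noteq> b"
  shows "simple_graph (N1 \<union> N2) (T1 \<union> T2 \<union> {{a, b}})"
  unfolding simple_graph_def
proof (intro conjI ballI)
  show "finite (N1 \<union> N2)" using g1 g2 unfolding simple_graph_def by simp
  fix e assume "e \<in> T1 \<union> T2 \<union> {{a, b}}"
  then consider "e \<in> T1" | "e \<in> T2" | "e = {a, b}" by blast
  then show "\<exists>x y. x \<noteq> y \<and> x \<in> N1 \<union> N2 \<and> y \<in> N1 \<union> N2 \<and> e = {x, y}"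
  proof cases
    case 1
    then obtain x y where "x \<noteq> y" "x \<in> N1" "y \<in> N1" "e = {x, y}"
      using g1 unfolding simple_graph_def by blast
    then show ?thesis by blast
  next
    case 2
    then obtain x y where "x \<noteq> y" "x \<in> N2" "y \<in> N2" "e = {x, y}"
      using g2 unfolding simple_graph_def by blast
    then show ?thesis by blast
  qed (use assms in blast)
qed

lemma is_tree_glue:
  assumes t1: "is_tree N1 T1" and t2: "is_tree N2 T2" and d: "N1 \<inter> N2 = {}"
    and a: "a \<in> N1" and b: "b \<in> N2"
  shows "is_tree (N1 \<union> N2) (T1 \<union> T2 \<union> {{a, b}})"
proof -
  define T where "T = T1 \<union> T2 \<union> {{a, b}}"
  have ab: "a \<noteq> b" using a b d by auto
  have "simple_graph N1 T1" "simple_graph N2 T2" using t1 t2 unfolding is_tree_def by simp_all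
  then have "simple_graph (N1 \<union> N2) T" unfolding T_def using a b ab by (rule simple_graph_Un_edge)
  moreover have "connected_graph (N1 \<union> N2) T"
    using connected_graph_Un_edge[of N1 T1 N2 T2 a b T] t1 t2 a b ab
    unfolding is_tree_def T_def by blast
  moreover have "\<not> connected_graph (N1 \<union> N2) (T - {e})" if e: "e \<in> T" for e
  proof -
    consider "e \<in> T1" | "e \<in> T2" | "e = {a, b}" using e unfolding T_def by auto
    then show ?thesis
    proof cases
      case 1 then show ?thesis using glued_tree_bridge[OF t1 t2 d a b] unfolding T_def by blast
    next
      case 2
      have "N2 \<union> N1 = N1 \<union> N2" "T2 \<union> T1 \<union> {{b, a}} = T" unfolding T_def by (auto simp: insert_commute)
      then show ?thesis using glued_tree_bridge[OF t2 t1 _ b a 2] d by (metis inf_commute)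
    next
      case 3
      have "\<forall>f\<in>T - {e}. f \<inter> N1 \<noteq> {} \<longrightarrow> f \<subseteq> N1"
        using 3 d is_tree_edge_subset[OF t1] is_tree_edge_subset[OF t2] unfolding T_def by blast
      then show ?thesis
        using walk_closed[of "T - {e}" a b N1] a b d unfolding connected_graph_def by blast
    qed
  qed
  ultimately show ?thesis unfolding is_tree_def T_def by blast
qed


section \<open>Tree decompositions of vertex subsets\<close>

text \<open>A tree decomposition without the covering conditions: only the subtree condition, for
  the vertices occurring in some bag.\<close>
definition tree_bags :: "nat set \<Rightarrow> nat set set \<Rightarrow> (nat \<Rightarrow> 'a set) \<Rightarrow> bool" where
  "tree_bags N TE X \<longleftrightarrow> is_tree N TE \<and>
     (\<forall>x\<in>\<Union>(X ` N). connected_graph {u\<in>N. x \<in> X u} {e\<in>TE. e \<subseteq> {u\<in>N. x \<in> X u}})"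

lemma tree_bags_singleton: "tree_bags {m} {} (\<lambda>_. B)"
  unfolding tree_bags_def
proof (intro conjI ballI)
  show "is_tree {m} {}" by (rule is_tree_singleton)
  fix x assume "x \<in> \<Union>((\<lambda>_. B) ` {m})"
  then have "{u\<in>{m}. x \<in> B} = {m}" by auto
  then show "connected_graph {u\<in>{m}. x \<in> B} {e\<in>{}. e \<subseteq> {u\<in>{m}. x \<in> B}}"
    unfolding connected_graph_def by simp
qed

lemma tree_bags_finite: "tree_bags N TE X \<Longrightarrow> finite N"
  unfolding tree_bags_def is_tree_def simple_graph_def by simp

lemma tree_bags_subtree:
  "tree_bags N TE X \<Longrightarrow> x \<in> X u \<Longrightarrow> u \<in> N \<Longrightarrow>
    connected_graph {u\<in>N. x \<in> X u} {e\<in>TE. e \<subseteq> {u\<in>N. x \<in> X u}}"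
  unfolding tree_bags_def by blast

lemma tree_bags_glue:
  assumes d1: "tree_bags N1 T1 X1" and d2: "tree_bags N2 T2 X2" and d: "N1 \<inter> N2 = {}"
    and a: "a \<in> N1" and b: "b \<in> N2"
    and shared: "\<And>x. x \<in> \<Union>(X1 ` N1) \<Longrightarrow> x \<in> \<Union>(X2 ` N2) \<Longrightarrow> x \<in> X1 a \<and> x \<in> X2 b"
  shows "tree_bags (N1 \<union> N2) (T1 \<union> T2 \<union> {{a, b}}) (\<lambda>u. if u \<in> N1 then X1 u else X2 u)"
  unfolding tree_bags_def
proof (intro conjI ballI)
  show "is_tree (N1 \<union> N2) (T1 \<union> T2 \<union> {{a, b}})"
    using is_tree_glue[OF _ _ d a b] d1 d2 unfolding tree_bags_def by blast
  define T where "T = T1 \<union> T2 \<union> {{a, b}}"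
  fix x assume x: "x \<in> \<Union>((\<lambda>u. if u \<in> N1 then X1 u else X2 u) ` (N1 \<union> N2))"
  define O1 where "O1 = {u\<in>N1. x \<in> X1 u}"
  define O2 where "O2 = {u\<in>N2. x \<in> X2 u}"
  have O: "{u\<in>N1 \<union> N2. x \<in> (if u \<in> N1 then X1 u else X2 u)} = O1 \<union> O2"
    unfolding O1_def O2_def using d by auto
  have F1: "{e\<in>T1. e \<subseteq> O1} \<subseteq> {e\<in>T. e \<subseteq> O1 \<union> O2}" unfolding T_def by auto
  have F2: "{e\<in>T2. e \<subseteq> O2} \<subseteq> {e\<in>T. e \<subseteq> O1 \<union> O2}" unfolding T_def by auto
  have c1: "connected_graph O1 {e\<in>T1. e \<subseteq> O1}" if "O1 \<noteq> {}"
    using that tree_bags_subtree[OF d1] unfolding O1_def by blast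
  have c2: "connected_graph O2 {e\<in>T2. e \<subseteq> O2}" if "O2 \<noteq> {}"
    using that tree_bags_subtree[OF d2] unfolding O2_def by blast
  have "O1 \<union> O2 \<noteq> {}" using x O by auto
  then consider "O2 = {}" | "O1 = {}" | "O1 \<noteq> {}" "O2 \<noteq> {}" by blast
  then have "connected_graph (O1 \<union> O2) {e\<in>T. e \<subseteq> O1 \<union> O2}"
  proof cases
    case 1
    then show ?thesis using connected_graph_mono[OF c1 F1] \<open>O1 \<union> O2 \<noteq> {}\<close> by simp
  next
    case 2
    then show ?thesis using connected_graph_mono[OF c2 F2] \<open>O1 \<union> O2 \<noteq> {}\<close> by simp
  next
    case 3
    then have "x \<in> \<Union>(X1 ` N1)" "x \<in> \<Union>(X2 ` N2)" unfolding O1_def O2_def by auto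
    then have "a \<in> O1" "b \<in> O2" using shared a b unfolding O1_def O2_def by auto
    moreover have "a \<noteq> b" using a b d by auto
    moreover have "{a, b} \<in> {e\<in>T. e \<subseteq> O1 \<union> O2}" using calculation unfolding T_def by auto
    ultimately show ?thesis using connected_graph_Un_edge[OF c1 c2 _ _ F1 F2] 3 by blast
  qed
  then show "connected_graph {u\<in>N1 \<union> N2. x \<in> (if u \<in> N1 then X1 u else X2 u)}
       {e\<in>T1 \<union> T2 \<union> {{a, b}}. e \<subseteq> {u\<in>N1 \<union> N2. x \<in> (if u \<in> N1 then X1 u else X2 u)}}"
    unfolding O T_def .
qed


section \<open>Cuts, neighbourhoods and bonds\<close>

definition induced_edges :: "'a set set \<Rightarrow> 'a set \<Rightarrow> 'a set set" where
  "induced_edges E S = {e\<in>E. e \<subseteq> S}"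

text \<open>Like connected_graph, this excludes the empty set.\<close>
definition connected_in :: "'a set set \<Rightarrow> 'a set \<Rightarrow> bool" where
  "connected_in E S \<longleftrightarrow> connected_graph S (induced_edges E S)"

definition reach :: "'a set set \<Rightarrow> 'a set \<Rightarrow> 'a set" where
  "reach E S = {y. \<exists>x\<in>S. (adj E)\<^sup>*\<^sup>* x y}"

definition reach_outside :: "'a set set \<Rightarrow> 'a set \<Rightarrow> 'a set" where
  "reach_outside E S = reach E S - S"

definition cut_edges :: "'a set set \<Rightarrow> 'a set \<Rightarrow> 'a set set" where
  "cut_edges E S = {e\<in>E. e \<inter> S \<noteq> {} \<and> \<not> e \<subseteq> S}"

definition nbhd :: "'a set set \<Rightarrow> 'a set \<Rightarrow> 'a set" where
  "nbhd E S = {w. w \<notin> S \<and> (\<exists>x\<in>S. adj E x w)}"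

lemma reach_subset:
  assumes "simple_graph V E" "S \<subseteq> V"
  shows "reach E S \<subseteq> V"
proof
  fix z assume "z \<in> reach E S"
  then obtain x where x: "x \<in> S" "(adj E)\<^sup>*\<^sup>* x z" unfolding reach_def by blast
  have "\<forall>e\<in>E. e \<inter> V \<noteq> {} \<longrightarrow> e \<subseteq> V" using simple_graph_edge_subset[OF assms(1)] by blast
  then show "z \<in> V" using walk_closed[OF x(2)] x(1) assms(2) by blast
qed

lemma connected_in_walk:
  "connected_in E S \<Longrightarrow> x \<in> S \<Longrightarrow> y \<in> S \<Longrightarrow> (adj (induced_edges E S))\<^sup>*\<^sup>* x y"
  unfolding connected_in_def connected_graph_def by simp

lemma nbhd_subset_reach_outside: "nbhd E S \<subseteq> reach_outside E S"
  unfolding nbhd_def reach_outside_def reach_def by blast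

lemma finite_refines_card_less:
  assumes "finite (A // R)" "R \<subseteq> S" "equiv A R" "equiv A S" "(x, y) \<in> S" "(x, y) \<notin> R"
  shows "card (A // S) < card (A // R)"
proof -
  have xy: "x \<in> A" "y \<in> A" using assms(4,5) unfolding equiv_def refl_on_def by auto
  have "R `` {x} \<noteq> R `` {y}" using eq_equiv_class_iff[OF assms(3) xy] assms(6) by simp
  moreover have "S `` (R `` {x}) = S `` (R `` {y})"
    using equiv_class_eq[OF assms(4,5)] refines_equiv_class_eq2[OF assms(2-4)] by simp
  ultimately have "\<not> inj_on (\<lambda>X. S `` X) (A // R)"
    using xy unfolding inj_on_def quotient_def by blast
  then have "card ((\<lambda>X. S `` X) ` (A // R)) < card (A // R)"
    using card_image_le[OF assms(1)] inj_on_iff_eq_card[OF assms(1)] le_neq_implies_less by metis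
  then show ?thesis using refines_equiv_image_eq[OF assms(2-4)] by simp
qed

lemma equiv_conn_rel: "equiv V (conn_rel V E)"
proof (rule equivI)
  show "conn_rel V E \<subseteq> V \<times> V" unfolding conn_rel_def by blast
  show "refl_on V (conn_rel V E)" unfolding refl_on_def conn_rel_def by simp
  show "sym (conn_rel V E)" unfolding sym_def conn_rel_def using walk_sym by auto
  show "trans (conn_rel V E)" unfolding trans_def conn_rel_def by (auto intro: rtranclp_trans)
qed

lemma conn_rel_mono:
  assumes "E \<subseteq> E'"
  shows "conn_rel V E \<subseteq> conn_rel V E'"
  unfolding conn_rel_def using walk_mono[OF assms] by auto

lemma num_components_less_delete_cut_edges:
  assumes sg: "simple_graph V E" and SV: "S \<subseteq> V" and R: "reach_outside E S \<noteq> {}"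
  shows "num_components V E < num_components V (E - cut_edges E S)"
proof -
  have fin_quot: "finite (V // conn_rel V E')" for E'
    using sg finite_quotient[OF _ equiv_type[OF equiv_conn_rel]] unfolding simple_graph_def by blast
  obtain y where y: "y \<in> reach_outside E S" using R by blast
  then obtain x where x: "x \<in> S" "(adj E)\<^sup>*\<^sup>* x y" "y \<notin> S"
    unfolding reach_outside_def reach_def by blast
  have "y \<in> V" using reach_subset[OF sg SV] y unfolding reach_outside_def by blast
  then have "(x, y) \<in> conn_rel V E" using x SV unfolding conn_rel_def by auto
  moreover have "(x, y) \<notin> conn_rel V (E - cut_edges E S)"
  proof
    assume "(x, y) \<in> conn_rel V (E - cut_edges E S)"
    moreover have "\<forall>e\<in>E - cut_edges E S. e \<inter> S \<noteq> {} \<longrightarrow> e \<subseteq> S" unfolding cut_edges_def by blast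
    ultimately have "y \<in> S" using walk_closed[of "E - cut_edges E S" x y S] x(1) unfolding conn_rel_def by simp
    then show False using x(3) by simp
  qed
  ultimately show ?thesis unfolding num_components_def
    by (intro finite_refines_card_less[OF fin_quot conn_rel_mono equiv_conn_rel equiv_conn_rel]) auto
qed

text \<open>An edge of the cut that is deleted is bypassed through S, a kept cut edge ab, and the
  outer part.\<close>
lemma walk_delete_proper_subset_cut_edges:
  assumes sg: "simple_graph V E" and cS: "connected_in E S"
    and cR: "connected_in E (reach_outside E S)" and F: "F \<subset> cut_edges E S" and pq: "adj E p q"
  shows "(adj (E - F))\<^sup>*\<^sup>* p q"
proof -
  define R where "R = reach_outside E S"
  obtain e0 where e0: "e0 \<in> cut_edges E S" "e0 \<notin> F" using F by blast
  then have e0E: "e0 \<in> E" "e0 \<inter> S \<noteq> {}" "\<not> e0 \<subseteq> S" unfolding cut_edges_def by auto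
  then obtain a b where ab: "a \<in> S" "b \<notin> S" "e0 = {a, b}"
    by (elim simple_graph_edgeE[OF sg]) (auto simp: insert_commute)
  have kept: "adj (E - F) a b" using ab e0 e0E(1) unfolding adj_def by auto
  have "(adj E)\<^sup>*\<^sup>* a b" using ab e0E(1) unfolding adj_def by auto
  then have bR: "b \<in> R" using ab unfolding R_def reach_outside_def reach_def by blast
  have subS: "induced_edges E S \<subseteq> E - F"
    using F unfolding induced_edges_def cut_edges_def by blast
  have subR: "induced_edges E R \<subseteq> E - F"
    using F unfolding induced_edges_def cut_edges_def R_def reach_outside_def by blast
  have bypass: "(adj (E - F))\<^sup>*\<^sup>* x y" if x: "x \<in> S" and y: "y \<notin> S" and xy: "adj E x y" for x y
  proof -
    have "(adj E)\<^sup>*\<^sup>* x y" using xy by simp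
    then have "y \<in> R" using x y unfolding R_def reach_outside_def reach_def by blast
    then have "(adj (E - F))\<^sup>*\<^sup>* b y"
      using walk_mono[OF subR] connected_in_walk[OF cR[folded R_def] bR] by blast
    moreover have "(adj (E - F))\<^sup>*\<^sup>* x a"
      using walk_mono[OF subS] connected_in_walk[OF cS x ab(1)] by blast
    ultimately show ?thesis using kept by (meson rtranclp.rtrancl_into_rtrancl rtranclp_trans)
  qed
  show ?thesis
  proof (cases "{p, q} \<in> F")
    case False
    then have "adj (E - F) p q" using pq unfolding adj_def by simp
    then show ?thesis by simp
  next
    case True
    then have "{p, q} \<inter> S \<noteq> {}" "\<not> {p, q} \<subseteq> S" using F unfolding cut_edges_def by auto
    then consider "p \<in> S" "q \<notin> S" | "q \<in> S" "p \<notin> S" by blast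
    then show ?thesis
    proof cases
      case 1 then show ?thesis using bypass pq by simp
    next
      case 2 then show ?thesis using bypass pq walk_sym adj_commute by metis
    qed
  qed
qed

lemma is_bond_cut_edges:
  assumes sg: "simple_graph V E" and SV: "S \<subseteq> V" and cS: "connected_in E S"
    and R: "reach_outside E S \<noteq> {}" and cR: "connected_in E (reach_outside E S)"
  shows "is_bond V E (cut_edges E S)"
proof -
  have "conn_rel V (E - F) = conn_rel V E" if F: "F \<subset> cut_edges E S" for F
  proof
    show "conn_rel V (E - F) \<subseteq> conn_rel V E" by (rule conn_rel_mono) blast
    have "(adj (E - F))\<^sup>*\<^sup>* (id p) (id q)" if "(adj E)\<^sup>*\<^sup>* p q" for p q
      using walk_delete_proper_subset_cut_edges[OF sg cS cR F] that by (rule rtranclp_map) simp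
    then show "conn_rel V E \<subseteq> conn_rel V (E - F)" unfolding conn_rel_def by auto
  qed
  moreover have "cut_edges E S \<subseteq> E" unfolding cut_edges_def by blast
  ultimately show ?thesis
    using num_components_less_delete_cut_edges[OF sg SV R] unfolding is_bond_def num_components_def
    by auto
qed

lemma card_nbhd_le_card_cut_edges:
  assumes "simple_graph V E"
  shows "card (nbhd E S) \<le> card (cut_edges E S)"
proof -
  define outer where "outer e = (SOME w. w \<in> e \<and> w \<notin> S)" for e
  have "outer {x, w} = w" if "x \<in> S" "w \<notin> S" for x w
    using someI_ex[of "\<lambda>w'. w' \<in> {x, w} \<and> w' \<notin> S"] that unfolding outer_def by blast
  then have "nbhd E S \<subseteq> outer ` cut_edges E S"
    unfolding nbhd_def cut_edges_def adj_def by force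
  moreover have "finite (cut_edges E S)"
    using simple_graph_finite_edges[OF assms] unfolding cut_edges_def by simp
  ultimately show ?thesis using surj_card_le by blast
qed

lemma card_nbhd_le_cocirc:
  assumes sg: "simple_graph V E" and SV: "S \<subseteq> V" and cS: "connected_in E S"
    and R: "reach_outside E S = {} \<or> connected_in E (reach_outside E S)"
  shows "card (nbhd E S) \<le> cocirc V E"
proof (cases "reach_outside E S = {}")
  case True
  then show ?thesis using nbhd_subset_reach_outside[of E S] by simp
next
  case False
  then have "is_bond V E (cut_edges E S)" using is_bond_cut_edges[OF sg SV cS] R by blast
  moreover have "finite {F. is_bond V E F}"
    using simple_graph_finite_edges[OF sg] unfolding is_bond_def by simp
  ultimately have "card (cut_edges E S) \<le> cocirc V E" unfolding cocirc_def by simp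
  then show ?thesis using card_nbhd_le_card_cut_edges[OF sg, of S] by simp
qed


section \<open>Components of vertex subsets\<close>

definition component :: "'a set set \<Rightarrow> 'a set \<Rightarrow> 'a \<Rightarrow> 'a set" where
  "component E A y = {z\<in>A. (adj (induced_edges E A))\<^sup>*\<^sup>* y z}"

lemma component_subset: "component E A y \<subseteq> A"
  unfolding component_def by blast

lemma component_self: "y \<in> A \<Longrightarrow> y \<in> component E A y"
  unfolding component_def by simp

lemma walk_induced_edges_closed: "(adj (induced_edges E A))\<^sup>*\<^sup>* y z \<Longrightarrow> y \<in> A \<Longrightarrow> z \<in> A"
  by (rule walk_closed) (auto simp: induced_edges_def)

lemma walk_in_component:
  assumes "(adj (induced_edges E A))\<^sup>*\<^sup>* y z" "y \<in> A"
  shows "(adj (induced_edges E (component E A y)))\<^sup>*\<^sup>* y z"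
  using assms(1)
proof (induction rule: rtranclp_induct)
  case (step z w)
  have yw: "(adj (induced_edges E A))\<^sup>*\<^sup>* y w" using step(1,2) by (rule rtranclp.rtrancl_into_rtrancl)
  have "z \<in> A" "w \<in> A"
    using walk_induced_edges_closed[OF step(1) assms(2)] walk_induced_edges_closed[OF yw assms(2)] .
  then have "z \<in> component E A y" "w \<in> component E A y"
    using step(1) yw unfolding component_def by auto
  moreover have "{z, w} \<in> induced_edges E A" "z \<noteq> w" using step(2) unfolding adj_def by auto
  ultimately have "adj (induced_edges E (component E A y)) z w"
    unfolding adj_def induced_edges_def by auto
  then show ?case using step(3) by simp
qed simp

lemma connected_in_component: "y \<in> A \<Longrightarrow> connected_in E (component E A y)"
  unfolding connected_in_def
proof (rule connected_graphI_hub)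
  assume y: "y \<in> A"
  show "y \<in> component E A y" using component_self[OF y] .
  fix p assume "p \<in> component E A y"
  then have "(adj (induced_edges E A))\<^sup>*\<^sup>* y p" unfolding component_def by simp
  from walk_sym[OF walk_in_component[OF this y]]
  show "(adj (induced_edges E (component E A y)))\<^sup>*\<^sup>* p y" .
qed

lemma component_closed:
  assumes "x \<in> component E A y" "w \<in> A" "adj E x w"
  shows "w \<in> component E A y"
proof -
  have "x \<in> A" using assms(1) unfolding component_def by simp
  then have "adj (induced_edges E A) x w" using assms(2,3) unfolding adj_def induced_edges_def by auto
  then show ?thesis using assms(1,2) unfolding component_def by auto
qed

lemma component_eq:
  assumes "z \<in> component E A y"
  shows "component E A z = component E A y"
proof -
  have yz: "(adj (induced_edges E A))\<^sup>*\<^sup>* y z" using assms unfolding component_def by simp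
  have zy: "(adj (induced_edges E A))\<^sup>*\<^sup>* z y" using walk_sym[OF yz] .
  show ?thesis unfolding component_def using yz zy by (auto intro: rtranclp_trans)
qed

lemma components_disjoint:
  assumes "C1 \<in> component E A ` A" "C2 \<in> component E A ` A" "C1 \<noteq> C2"
  shows "C1 \<inter> C2 = {}"
proof (rule ccontr)
  assume "C1 \<inter> C2 \<noteq> {}"
  then obtain z where z: "z \<in> C1" "z \<in> C2" by blast
  obtain y1 y2 where "C1 = component E A y1" "C2 = component E A y2" using assms(1,2) by blast
  then have "C1 = component E A z" "C2 = component E A z" using component_eq z by metis+
  then show False using assms(3) by simp
qed

lemma Union_components: "\<Union>(component E A ` A) = A"
  using component_subset component_self by fastforce

lemma reach_outside_component_empty:
  assumes sg: "simple_graph V E" and y: "y \<in> V"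
  shows "reach_outside E (component E V y) = {}"
proof -
  have EV: "induced_edges E V = E"
    unfolding induced_edges_def using simple_graph_edge_subset[OF sg] by blast
  have "z \<in> component E V y" if z: "z \<in> reach E (component E V y)" for z
  proof -
    obtain x where x: "x \<in> component E V y" "(adj E)\<^sup>*\<^sup>* x z" using z unfolding reach_def by blast
    have "(adj E)\<^sup>*\<^sup>* y x" using x(1) EV unfolding component_def by simp
    then have yz: "(adj E)\<^sup>*\<^sup>* y z" using x(2) by (rule rtranclp_trans)
    have "z \<in> V" using reach_subset[OF sg, of "{y}"] y yz unfolding reach_def by blast
    then show "z \<in> component E V y" using yz EV unfolding component_def by simp
  qed
  then show ?thesis unfolding reach_outside_def by blast
qed

lemma reach_eq_if_connected_in:
  assumes "connected_in E S" "C \<subseteq> S" "C \<noteq> {}"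
  shows "reach E C = reach E S"
proof
  show "reach E C \<subseteq> reach E S" using assms(2) unfolding reach_def by blast
  show "reach E S \<subseteq> reach E C"
  proof
    fix z assume "z \<in> reach E S"
    then obtain x where x: "x \<in> S" "(adj E)\<^sup>*\<^sup>* x z" unfolding reach_def by blast
    obtain y where y: "y \<in> C" using assms(3) by blast
    have "(adj (induced_edges E S))\<^sup>*\<^sup>* y x" using connected_in_walk[OF assms(1)] y x(1) assms(2) by blast
    then have "(adj E)\<^sup>*\<^sup>* y x" using walk_mono[of "induced_edges E S" E] unfolding induced_edges_def by blast
    then have "(adj E)\<^sup>*\<^sup>* y z" using x(2) by (rule rtranclp_trans)
    then show "z \<in> reach E C" using y unfolding reach_def by blast
  qed
qed


text \<open>A walk in S to v starting outside a component C of S - {v} cannot enter C, since C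
  is closed under edges of S - {v}.\<close>
lemma walk_avoids_component:
  assumes "(adj (induced_edges E S))\<^sup>*\<^sup>* p v" "p \<in> S" "p \<notin> component E (S - {v}) y"
  shows "(adj (induced_edges E (S - component E (S - {v}) y)))\<^sup>*\<^sup>* p v"
  using assms
proof (induction rule: converse_rtranclp_induct)
  case (step p p')
  define C where "C = component E (S - {v}) y"
  show ?case
  proof (cases "p = v")
    case False
    have e: "{p, p'} \<in> E" "{p, p'} \<subseteq> S" "p \<noteq> p'"
      using step.hyps(1) unfolding adj_def induced_edges_def by auto
    have "p' \<notin> C"
    proof
      assume "p' \<in> C"
      moreover have "adj E p' p" using e unfolding adj_def by (auto simp: insert_commute)
      ultimately have "p \<in> C" unfolding C_def using component_closed False step.prems(1) by fast
      then show False using step.prems(2) unfolding C_def by simp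
    qed
    then have "adj (induced_edges E (S - C)) p p'"
      using e step.prems unfolding adj_def induced_edges_def C_def by auto
    moreover have "(adj (induced_edges E (S - C)))\<^sup>*\<^sup>* p' v"
      using step.IH e(2) \<open>p' \<notin> C\<close> unfolding C_def by simp
    ultimately show ?thesis unfolding C_def by (rule converse_rtranclp_into_rtranclp)
  qed simp
qed simp

text \<open>The part of the graph reached from a component C of S - {v} outside C consists of
  S - C and the part reached from S outside S; all of it is joined to v, the latter through a
  neighbour of v outside S.\<close>
lemma connected_in_reach_outside_component:
  assumes cS: "connected_in E S"
    and R: "reach_outside E S = {} \<or> connected_in E (reach_outside E S)"
    and v: "v \<in> S" and vb: "reach_outside E S \<noteq> {} \<Longrightarrow> \<exists>b\<in>reach_outside E S. adj E v b"
    and y: "y \<in> S - {v}"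
  shows "connected_in E (reach_outside E (component E (S - {v}) y))"
proof -
  define C where "C = component E (S - {v}) y"
  define U where "U = reach_outside E S \<union> (S - C)"
  have CS: "C \<subseteq> S - {v}" unfolding C_def by (rule component_subset)
  have yC: "y \<in> C" unfolding C_def using y by (rule component_self)
  have UC: "reach_outside E C = U"
    using reach_eq_if_connected_in[OF cS] CS yC unfolding U_def reach_outside_def reach_def by blast
  have vU: "v \<in> U" using v CS unfolding U_def by blast
  have "(adj (induced_edges E U))\<^sup>*\<^sup>* p v" if pU: "p \<in> U" for p
  proof (cases "p \<in> S - C")
    case True
    then have p: "p \<in> S" "p \<notin> component E (S - {v}) y" unfolding C_def by auto
    have "(adj (induced_edges E S))\<^sup>*\<^sup>* p v" using connected_in_walk[OF cS p(1) v] .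
    then have "(adj (induced_edges E (S - C)))\<^sup>*\<^sup>* p v"
      unfolding C_def using p by (rule walk_avoids_component)
    moreover have "induced_edges E (S - C) \<subseteq> induced_edges E U"
      unfolding induced_edges_def U_def by blast
    ultimately show ?thesis using walk_mono by metis
  next
    case False
    then have pR: "p \<in> reach_outside E S" using pU unfolding U_def by blast
    then obtain b where b: "b \<in> reach_outside E S" "adj E v b" using vb by blast
    have "(adj (induced_edges E (reach_outside E S)))\<^sup>*\<^sup>* p b"
      using connected_in_walk[OF _ pR b(1)] R pR by blast
    moreover have "induced_edges E (reach_outside E S) \<subseteq> induced_edges E U"
      unfolding induced_edges_def U_def by blast
    ultimately have "(adj (induced_edges E U))\<^sup>*\<^sup>* p b" using walk_mono by metis
    moreover have "adj (induced_edges E U) b v"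
      using b vU unfolding U_def adj_def induced_edges_def by (auto simp: insert_commute)
    ultimately show ?thesis by (rule rtranclp.rtrancl_into_rtrancl)
  qed
  then have "connected_in E U" unfolding connected_in_def by (rule connected_graphI_hub[OF vU])
  then show ?thesis unfolding C_def[symmetric] UC .
qed


text \<open>The root m is the least node, so that parts built with different roots can be made
  disjoint.\<close>
definition partial_decomposition ::
  "'a set set \<Rightarrow> nat \<Rightarrow> 'a set \<Rightarrow> 'a set \<Rightarrow> nat \<Rightarrow> nat set \<Rightarrow> nat set set \<Rightarrow> (nat \<Rightarrow> 'a set) \<Rightarrow> bool"
where
  "partial_decomposition E K S U m N TE X \<longleftrightarrow> tree_bags N TE X \<and> m \<in> N \<and> N \<subseteq> {m..} \<and>
     (\<forall>u\<in>N. X u \<subseteq> U \<and> card (X u) \<le> K) \<and> S \<subseteq> \<Union>(X ` N) \<and>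
     (\<forall>e\<in>E. e \<inter> S \<noteq> {} \<longrightarrow> (\<exists>u\<in>N. e \<subseteq> X u))"

lemma partial_decompositionD:
  assumes "partial_decomposition E K S U m N TE X"
  shows "tree_bags N TE X" "m \<in> N" "N \<subseteq> {m..}" "\<And>u. u \<in> N \<Longrightarrow> X u \<subseteq> U"
    "\<And>u. u \<in> N \<Longrightarrow> card (X u) \<le> K" "S \<subseteq> \<Union>(X ` N)"
    "\<And>e. e \<in> E \<Longrightarrow> e \<inter> S \<noteq> {} \<Longrightarrow> \<exists>u\<in>N. e \<subseteq> X u"
  using assms unfolding partial_decomposition_def by auto

text \<open>A part C whose neighbourhood lies in the root bag B, and which is separated from
  the rest by B, may hang below the root: a vertex in bags on both sides is a neighbour of C,
  hence lies in B and in the root bag of C's part.\<close>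
lemma partial_decomposition_attach:
  assumes D1: "partial_decomposition E K S (B \<union> S) m N1 T1 X1" "X1 m = B"
    and D2: "partial_decomposition E K C (C \<union> nbhd E C) m' N2 T2 X2" "nbhd E C \<subseteq> X2 m'"
    and below: "\<And>u. u \<in> N1 \<Longrightarrow> u < m'"
    and CB: "C \<inter> B = {}" "nbhd E C \<subseteq> B" and CS: "C \<inter> S = {}"
  defines "X \<equiv> \<lambda>u. if u \<in> N1 then X1 u else X2 u"
  shows "partial_decomposition E K (C \<union> S) (B \<union> (C \<union> S)) m (N1 \<union> N2) (T1 \<union> T2 \<union> {{m, m'}}) X"
    and "X m = B"
proof -
  note P1 = partial_decompositionD[OF D1(1)] and P2 = partial_decompositionD[OF D2(1)]
  have disjN: "N1 \<inter> N2 = {}" using below P2(3) by fastforce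
  have X2: "X u = X2 u" if "u \<in> N2" for u using disjN that unfolding X_def by auto
  have shared: "x \<in> X1 m \<and> x \<in> X2 m'" if x: "x \<in> \<Union>(X1 ` N1)" "x \<in> \<Union>(X2 ` N2)" for x
  proof -
    obtain u1 u2 where "u1 \<in> N1" "x \<in> X1 u1" "u2 \<in> N2" "x \<in> X2 u2" using x by blast
    then have "x \<in> B \<union> S" "x \<in> C \<union> nbhd E C" using P1(4) P2(4) by blast+
    then have "x \<in> nbhd E C" using CB CS by blast
    then show ?thesis using D1(2) D2(2) CB by auto
  qed
  have TB: "tree_bags (N1 \<union> N2) (T1 \<union> T2 \<union> {{m, m'}}) X"
    unfolding X_def using P1(1) P2(1) disjN P1(2) P2(2) shared by (rule tree_bags_glue)
  have root: "m \<in> N1 \<union> N2" "N1 \<union> N2 \<subseteq> {m..}"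
    using P1(2,3) P2(3) below by fastforce+
  have bags: "\<forall>u\<in>N1 \<union> N2. X u \<subseteq> B \<union> (C \<union> S) \<and> card (X u) \<le> K"
  proof
    fix u assume u: "u \<in> N1 \<union> N2"
    show "X u \<subseteq> B \<union> (C \<union> S) \<and> card (X u) \<le> K"
    proof (cases "u \<in> N1")
      case True
      then show ?thesis using P1(4,5) unfolding X_def by auto
    next
      case False
      then have "u \<in> N2" "X u = X2 u" using u X2 by auto
      then have "X u \<subseteq> C \<union> nbhd E C" "card (X u) \<le> K" using P2(4,5) by auto
      then show ?thesis using CB(2) by blast
    qed
  qed
  have cover: "C \<union> S \<subseteq> \<Union>(X ` (N1 \<union> N2))"
  proof -
    have "X ` N1 = X1 ` N1" "X ` N2 = X2 ` N2" using X2 by (auto simp: X_def)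
    then show ?thesis using P1(6) P2(6) by auto
  qed
  have edges: "\<forall>e\<in>E. e \<inter> (C \<union> S) \<noteq> {} \<longrightarrow> (\<exists>u\<in>N1 \<union> N2. e \<subseteq> X u)"
  proof (intro ballI impI)
    fix e assume e: "e \<in> E" "e \<inter> (C \<union> S) \<noteq> {}"
    show "\<exists>u\<in>N1 \<union> N2. e \<subseteq> X u"
    proof (cases "e \<inter> C = {}")
      case True
      then have "e \<inter> S \<noteq> {}" using e(2) by auto
      then obtain u where "u \<in> N1" "e \<subseteq> X1 u" using P1(7) e(1) by blast
      then show ?thesis unfolding X_def by auto
    next
      case False
      then obtain u where "u \<in> N2" "e \<subseteq> X2 u" using P2(7) e by auto
      then show ?thesis using X2 by auto
    qed
  qed
  show "partial_decomposition E K (C \<union> S) (B \<union> (C \<union> S)) m (N1 \<union> N2) (T1 \<union> T2 \<union> {{m, m'}}) X"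
    unfolding partial_decomposition_def by (intro conjI TB root bags cover edges)
  show "X m = B" using D1(2) P1(2) unfolding X_def by simp
qed

lemma partial_decomposition_glue:
  assumes "finite CC"
    and parts: "\<forall>C\<in>CC. \<forall>m. \<exists>N TE X.
      partial_decomposition E K C (C \<union> nbhd E C) m N TE X \<and> nbhd E C \<subseteq> X m"
    and disj: "\<forall>C1\<in>CC. \<forall>C2\<in>CC. C1 \<noteq> C2 \<longrightarrow> C1 \<inter> C2 = {}"
    and sep: "\<forall>C\<in>CC. nbhd E C \<subseteq> B \<and> C \<inter> B = {}"
    and B: "card B \<le> K"
  shows "\<exists>N TE X. partial_decomposition E K (\<Union>CC) (B \<union> \<Union>CC) m N TE X \<and> X m = B"
  using assms
proof (induction CC rule: finite_induct)
  case empty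
  have "partial_decomposition E K {} B m {m} {} (\<lambda>_. B)"
    unfolding partial_decomposition_def using tree_bags_singleton B by auto
  then show ?case by auto
next
  case (insert C CC)
  obtain N1 T1 X1 where D1: "partial_decomposition E K (\<Union>CC) (B \<union> \<Union>CC) m N1 T1 X1" "X1 m = B"
    using insert.IH insert.prems by (metis insert_iff)
  have "finite N1" using tree_bags_finite[OF partial_decompositionD(1)[OF D1(1)]] .
  then have below: "u < Suc (Max N1)" if "u \<in> N1" for u using Max_ge[OF _ that] by simp
  obtain N2 T2 X2 where D2: "partial_decomposition E K C (C \<union> nbhd E C) (Suc (Max N1)) N2 T2 X2"
      "nbhd E C \<subseteq> X2 (Suc (Max N1))"
    using insert.prems(1) by (metis insertI1)
  have "C \<inter> C' = {}" if "C' \<in> CC" for C'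
    using insert.prems(2) insert.hyps(2) that by auto
  then have CS: "C \<inter> \<Union>CC = {}" by blast
  have CB: "C \<inter> B = {}" "nbhd E C \<subseteq> B" using insert.prems(3) by auto
  show ?case
    using partial_decomposition_attach[OF D1 D2 below CB CS] unfolding Union_insert by blast
qed


lemma exists_vertex_adj_reach_outside:
  assumes "S \<noteq> {}"
  obtains v where "v \<in> S" "reach_outside E S \<noteq> {} \<Longrightarrow> \<exists>b\<in>reach_outside E S. adj E v b"
proof (cases "reach_outside E S = {}")
  case True
  then show ?thesis using that assms by blast
next
  case False
  then obtain x y where "(adj E)\<^sup>*\<^sup>* x y" "x \<in> S" "y \<notin> S"
    unfolding reach_outside_def reach_def by blast
  then obtain a b where ab: "a \<in> S" "b \<notin> S" "adj E a b" by (rule rtranclp_exit)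
  then have "(adj E)\<^sup>*\<^sup>* a b" by simp
  then have "b \<in> reach_outside E S" using ab unfolding reach_outside_def reach_def by blast
  then show ?thesis using that ab by blast
qed

lemma component_delete_nbhd:
  shows "nbhd E (component E (S - {v}) y) \<subseteq> insert v (nbhd E S)"
    and "component E (S - {v}) y \<inter> insert v (nbhd E S) = {}"
proof
  fix w assume "w \<in> nbhd E (component E (S - {v}) y)"
  then obtain x where x: "x \<in> component E (S - {v}) y" "adj E x w" "w \<notin> component E (S - {v}) y"
    unfolding nbhd_def by blast
  have "x \<in> S" using x(1) component_subset by fast
  moreover have "w \<notin> S - {v}" using component_closed x by fast
  ultimately show "w \<in> insert v (nbhd E S)" using x(2) unfolding nbhd_def by blast
next
  show "component E (S - {v}) y \<inter> insert v (nbhd E S) = {}"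
    using component_subset[of E "S - {v}" y] unfolding nbhd_def by blast
qed

lemma finite_nbhd:
  assumes sg: "simple_graph V E" and SV: "S \<subseteq> V"
  shows "finite (nbhd E S)"
proof -
  have "nbhd E S \<subseteq> V"
    using nbhd_subset_reach_outside[of E S] reach_subset[OF sg SV] unfolding reach_outside_def by blast
  then show ?thesis using finite_subset sg unfolding simple_graph_def by blast
qed

text \<open>Putting v into the root bag extends a decomposition of S - {v} to one of S, because
  every edge at v that misses S - {v} ends in the neighbourhood of S.\<close>
lemma partial_decomposition_insert_root:
  assumes sg: "simple_graph V E" and v: "v \<in> S"
    and D: "partial_decomposition E K (S - {v}) (insert v (nbhd E S) \<union> (S - {v})) m N TE X"
      "X m = insert v (nbhd E S)"
  shows "partial_decomposition E K S (S \<union> nbhd E S) m N TE X" "nbhd E S \<subseteq> X m"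
proof -
  note P = partial_decompositionD[OF D(1)]
  have "X u \<subseteq> S \<union> nbhd E S" if "u \<in> N" for u using P(4)[OF that] v by blast
  moreover have "S \<subseteq> \<Union>(X ` N)" using P(2,6) D(2) by blast
  moreover have "\<exists>u\<in>N. e \<subseteq> X u" if e: "e \<in> E" "e \<inter> S \<noteq> {}" for e
  proof (cases "e \<inter> (S - {v}) = {}")
    case True
    obtain x w where xw: "x \<noteq> w" "e = {x, w}" using simple_graph_edgeE[OF sg e(1)] by metis
    then obtain z where z: "e = {v, z}" "z \<noteq> v"
      using True e(2) by (auto simp: doubleton_eq_iff)
    then have "z \<notin> S" using True by blast
    moreover have "adj E v z" using z e(1) unfolding adj_def by simp
    ultimately have "z \<in> nbhd E S" using v unfolding nbhd_def by blast
    then have "e \<subseteq> X m" using z(1) D(2) by blast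
    then show ?thesis using P(2) by blast
  qed (use P(7) e in blast)
  ultimately show "partial_decomposition E K S (S \<union> nbhd E S) m N TE X"
    using P(1,2,3,5) unfolding partial_decomposition_def by blast
  show "nbhd E S \<subseteq> X m" using D(2) by blast
qed

lemma partial_decomposition_exists:
  assumes sg: "simple_graph V E"
  shows "S \<subseteq> V \<Longrightarrow> connected_in E S \<Longrightarrow>
    reach_outside E S = {} \<or> connected_in E (reach_outside E S) \<Longrightarrow>
    \<exists>N TE X. partial_decomposition E (cocirc V E + 1) S (S \<union> nbhd E S) m N TE X \<and> nbhd E S \<subseteq> X m"
proof (induction "card S" arbitrary: S m rule: less_induct)
  case less
  note SV = less.prems(1) and cS = less.prems(2) and R = less.prems(3)
  have finS: "finite S" using finite_subset[OF SV] sg unfolding simple_graph_def by blast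
  have "S \<noteq> {}" using cS unfolding connected_in_def connected_graph_def by simp
  then obtain v where v: "v \<in> S" "reach_outside E S \<noteq> {} \<Longrightarrow> \<exists>b\<in>reach_outside E S. adj E v b"
    using exists_vertex_adj_reach_outside[where E = E] by blast
  define CC where "CC = component E (S - {v}) ` (S - {v})"
  define B where "B = insert v (nbhd E S)"
  have parts: "\<forall>C\<in>CC. \<forall>m. \<exists>N TE X.
      partial_decomposition E (cocirc V E + 1) C (C \<union> nbhd E C) m N TE X \<and> nbhd E C \<subseteq> X m"
  proof (intro ballI allI)
    fix C m' assume "C \<in> CC"
    then obtain y where y: "y \<in> S - {v}" and C: "C = component E (S - {v}) y" unfolding CC_def by blast
    have "C \<subseteq> S - {v}" unfolding C by (rule component_subset)
    then have "card C < card S" using v(1) psubset_card_mono[OF finS] by blast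
    moreover have "C \<subseteq> V" using \<open>C \<subseteq> S - {v}\<close> SV by blast
    moreover have "connected_in E C" unfolding C using y by (rule connected_in_component)
    moreover have "connected_in E (reach_outside E C)"
      unfolding C using connected_in_reach_outside_component[OF cS R v y] .
    ultimately show "\<exists>N TE X.
        partial_decomposition E (cocirc V E + 1) C (C \<union> nbhd E C) m' N TE X \<and> nbhd E C \<subseteq> X m'"
      using less.hyps by blast
  qed
  have sep: "\<forall>C\<in>CC. nbhd E C \<subseteq> B \<and> C \<inter> B = {}"
  proof
    fix C assume "C \<in> CC"
    then obtain y where "C = component E (S - {v}) y" unfolding CC_def by blast
    then show "nbhd E C \<subseteq> B \<and> C \<inter> B = {}" unfolding B_def using component_delete_nbhd[of E S v y] by simp
  qed
  have B: "card B \<le> cocirc V E + 1"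
    using card_nbhd_le_cocirc[OF sg SV cS R] finite_nbhd[OF sg SV] unfolding B_def
    by (simp add: card_insert_if)
  have "finite CC" using finS unfolding CC_def by simp
  moreover have "\<forall>C1\<in>CC. \<forall>C2\<in>CC. C1 \<noteq> C2 \<longrightarrow> C1 \<inter> C2 = {}"
    unfolding CC_def by (intro ballI impI) (rule components_disjoint)
  ultimately have "\<exists>N TE X. partial_decomposition E (cocirc V E + 1) (\<Union>CC) (B \<union> \<Union>CC) m N TE X \<and> X m = B"
    using partial_decomposition_glue[OF _ parts _ sep B] by blast
  moreover have "\<Union>CC = S - {v}" unfolding CC_def by (rule Union_components)
  ultimately obtain N TE X where
    D: "partial_decomposition E (cocirc V E + 1) (S - {v}) (B \<union> (S - {v})) m N TE X" "X m = B"
    by auto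
  show ?case using partial_decomposition_insert_root[OF sg v(1) D[unfolded B_def]] by blast
qed

lemma partial_decomposition_whole_graph:
  assumes sg: "simple_graph V E"
  shows "\<exists>N TE X. partial_decomposition E (cocirc V E + 1) V V 0 N TE X"
proof -
  define CC where "CC = component E V ` V"
  have parts: "\<forall>C\<in>CC. \<forall>m. \<exists>N TE X.
      partial_decomposition E (cocirc V E + 1) C (C \<union> nbhd E C) m N TE X \<and> nbhd E C \<subseteq> X m"
  proof (intro ballI allI)
    fix C m assume "C \<in> CC"
    then obtain y where y: "y \<in> V" and C: "C = component E V y" unfolding CC_def by blast
    have "C \<subseteq> V" unfolding C by (rule component_subset)
    moreover have "connected_in E C" unfolding C using y by (rule connected_in_component)
    moreover have "reach_outside E C = {} \<or> connected_in E (reach_outside E C)"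
      unfolding C using reach_outside_component_empty[OF sg y] by simp
    ultimately show "\<exists>N TE X.
        partial_decomposition E (cocirc V E + 1) C (C \<union> nbhd E C) m N TE X \<and> nbhd E C \<subseteq> X m"
      by (rule partial_decomposition_exists[OF sg])
  qed
  have sep: "\<forall>C\<in>CC. nbhd E C \<subseteq> {} \<and> C \<inter> {} = {}"
    using reach_outside_component_empty[OF sg] nbhd_subset_reach_outside unfolding CC_def by fast
  have "finite CC" using sg unfolding CC_def simple_graph_def by simp
  moreover have "\<forall>C1\<in>CC. \<forall>C2\<in>CC. C1 \<noteq> C2 \<longrightarrow> C1 \<inter> C2 = {}"
    unfolding CC_def by (intro ballI impI) (rule components_disjoint)
  ultimately have "\<exists>N TE X. partial_decomposition E (cocirc V E + 1) (\<Union>CC) ({} \<union> \<Union>CC) 0 N TE X \<and> X 0 = {}"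
    using partial_decomposition_glue[OF _ parts _ sep] by simp
  moreover have "\<Union>CC = V" unfolding CC_def by (rule Union_components)
  ultimately show ?thesis by auto
qed

lemma tree_decomposition_if_partial_decomposition:
  assumes sg: "simple_graph V E" and D: "partial_decomposition E K V V m N TE X"
  shows "tree_decomposition V E N TE X"
proof -
  note P = partial_decompositionD[OF D]
  have "\<forall>e\<in>E. \<exists>u\<in>N. e \<subseteq> X u"
  proof
    fix e assume e: "e \<in> E"
    then have "e \<inter> V \<noteq> {}" by (elim simple_graph_edgeE[OF sg]) auto
    then show "\<exists>u\<in>N. e \<subseteq> X u" using P(7) e by blast
  qed
  moreover have "connected_graph {u\<in>N. x \<in> X u} {e\<in>TE. e \<subseteq> {u\<in>N. x \<in> X u}}" if "x \<in> V" for x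
    using tree_bags_subtree[OF P(1)] P(6) that by blast
  ultimately show ?thesis
    using P(1,4) unfolding tree_decomposition_def tree_bags_def by blast
qed

lemma treewidth_le_td_width:
  assumes "finite V" and D: "tree_decomposition V E N TE X"
  shows "treewidth V E \<le> td_width N X"
proof -
  define W where "W = {td_width N X | N TE X. tree_decomposition V E N TE X}"
  have "W \<subseteq> {..card V}"
  proof
    fix w assume "w \<in> W"
    then obtain N' TE' X' where w: "w = td_width N' X'" "tree_decomposition V E N' TE' X'"
      unfolding W_def by blast
    then have "finite N'" "N' \<noteq> {}" "\<forall>u\<in>N'. card (X' u) \<le> card V"
      using card_mono[OF assms(1)]
      unfolding tree_decomposition_def is_tree_def simple_graph_def connected_graph_def by auto
    then have "Max ((\<lambda>u. card (X' u)) ` N') \<le> card V" by (subst Max_le_iff) auto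
    then show "w \<in> {..card V}" unfolding w(1) td_width_def by simp
  qed
  then have "finite W" by (rule finite_subset) simp
  moreover have "td_width N X \<in> W" unfolding W_def using D by blast
  ultimately show ?thesis unfolding treewidth_def W_def[symmetric] by (rule Min_le)
qed

lemma td_width_le:
  assumes "partial_decomposition E K S U m N TE X"
  shows "td_width N X \<le> K - 1"
proof -
  note P = partial_decompositionD[OF assms]
  have "Max ((\<lambda>u. card (X u)) ` N) \<le> K"
    using P(2,5) tree_bags_finite[OF P(1)] by (subst Max_le_iff) auto
  then show ?thesis unfolding td_width_def by simp
qed

theorem theorem1p3:
  fixes V :: "'a set" and E :: "'a set set"
  assumes "simple_graph V E" and "E \<noteq> {}"
  shows "treewidth V E \<le> cocirc V E"
proof -
  obtain N TE X where D: "partial_decomposition E (cocirc V E + 1) V V 0 N TE X"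
    using partial_decomposition_whole_graph[OF assms(1)] by blast
  have "finite V" using assms(1) unfolding simple_graph_def by simp
  then have "treewidth V E \<le> td_width N X"
    using tree_decomposition_if_partial_decomposition[OF assms(1) D] by (rule treewidth_le_td_width)
  also have "\<dots> \<le> cocirc V E" using td_width_le[OF D] by simp
  finally show ?thesis .
qed

end
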